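(* Consider a general-utility objective $G(\pi)=\mathcal{F}(\mu^\pi)$ as in the context and assume: (i) $\rho(s)\ge\rho_{\min}>0$ for all $s$; (ii) for every policy $\pi$, all entries of $\Gamma(\pi)$ lie in $[0,U]$ for some $U\ge0$; (iii) $G$ is $L$-smooth with respect to the Euclidean norm, i.e. $|G(\pi)-G(\pi')-\langle\nabla_\pi G(\pi'),\pi-\pi'\rangle|\le\frac{L}{2}\|\pi-\pi'\|_2^2$ for all policies $\pi,\pi'$. Let $\pi^*\in\arg\max_\pi G(\pi)$, let $\pi_0$ be an arbitrary policy and for $k\ge0$ let $\pi_{k+1}$ be obtained from $\pi_k$ by the projected Q-ascent update with step size $\eta=\rho_{\min}/L$. Then for every $K\ge1$, $$G(\pi^* )-G(\pi_K)\le\frac{32\,L\,\big(1+\frac{1}{(1-\gamma)\rho_{\min}}\big)}{(1-\gamma)^2\,\rho_{\min}\,K}.$$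
   Context: Finite MDP with state space $\mathcal{S}$, action space $\mathcal{A}$, transition kernel $\mathcal{P}$, initial distribution $\rho$, discount $\gamma\in[0,1)$. Policies are tables $\pi=(\pi(a\mid s))$ with $\pi(\cdot\mid s)\in\Delta_{\mathcal{A}}$, viewed as vectors in $\mathbb{R}^{|\mathcal{S}||\mathcal{A}|}$. The state-action occupancy measure is $\mu^\pi(s,a)=\sum_{s_0}\rho(s_0)\sum_{\tau\ge0}\gamma^\tau\Pr^\pi[s_\tau=s,a_\tau=a\mid s_0]$; $\mathcal{K}$ is the (convex) set of all occupancy measures, and $\pi\mapsto\mu^\pi$ is a bijection onto $\mathcal{K}$ with inverse $\pi(a\mid s)=\mu^\pi(s,a)/\sum_{a'}\mu^\pi(s,a')$. $\mathcal{F}:\mathcal{K}\to\mathbb{R}$ is concave and differentiable, $G(\pi)=\mathcal{F}(\mu^\pi)$, and the pseudo-reward is $\Gamma(\pi)=\nabla\mathcal{F}(\mu^\pi)\in\mathbb{R}^{\mathcal{S}\times\mathcal{A}}$. For a bounded $u$, $Q^\pi_u(s,a)=\mathbb{E}[\sum_{\tau\ge0}\gamma^\tau u(s_\tau,a_\tau)\mid s_0=s,a_0=a]$ under $\mathcal{P}$ and $\pi$. Projected Q-ascent (PQA) update: for every $s\in\mathcal{S}$, $\pi_{k+1}(\cdot\mid s)=\mathrm{Proj}_{\Delta_{\mathcal{A}}}\big[\pi_k(\cdot\mid s)+\eta\,Q^{\pi_k}_{\Gamma(\pi_k)}(s,\cdot)\big]$, with $\mathrm{Proj}_{\Delta_{\mathcal{A}}}$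 the Euclidean projection onto the probability simplex. *)

theory Defs
  imports "HOL-Analysis.Analysis"
begin

text \<open>Transition kernel: P s a s' = probability of moving to s' from s under action a.
  Policies and occupancy measures are vectors in real^('s \<times> 'a);
  for a policy p, p $ (s,a) is p(a | s).\<close>

definition prob_simplex :: "(real ^ 'a) set" where
  "prob_simplex = {p. (\<forall>a. 0 \<le> p $ a) \<and> (\<Sum>a\<in>UNIV. p $ a) = 1}"

definition policies :: "(real ^ ('s::finite \<times> 'a::finite)) set" where
  "policies = {p. \<forall>s. (\<chi> a. p $ (s, a)) \<in> prob_simplex}"

definition is_kernel :: "('s::finite \<Rightarrow> 'a::finite \<Rightarrow> 's \<Rightarrow> real) \<Rightarrow> bool" where
  "is_kernel P \<longleftrightarrow> (\<forall>s a s'. 0 \<le> P s a s') \<and> (\<forall>s a. (\<Sum>s'\<in>UNIV. P s a s') = 1)"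

definition is_distribution :: "('s::finite \<Rightarrow> real) \<Rightarrow> bool" where
  "is_distribution rho \<longleftrightarrow> (\<forall>s. 0 \<le> rho s) \<and> (\<Sum>s\<in>UNIV. rho s) = 1"

fun state_dist :: "('s::finite \<Rightarrow> 'a::finite \<Rightarrow> 's \<Rightarrow> real) \<Rightarrow> ('s \<Rightarrow> real)
    \<Rightarrow> real ^ ('s \<times> 'a) \<Rightarrow> nat \<Rightarrow> 's \<Rightarrow> real" where
  "state_dist P rho p 0 = rho"
| "state_dist P rho p (Suc t) =
     (\<lambda>s'. \<Sum>s\<in>UNIV. \<Sum>a\<in>UNIV. state_dist P rho p t s * p $ (s, a) * P s a s')"

definition occ :: "('s::finite \<Rightarrow> 'a::finite \<Rightarrow> 's \<Rightarrow> real) \<Rightarrow> ('s \<Rightarrow> real) \<Rightarrow> real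
    \<Rightarrow> real ^ ('s \<times> 'a) \<Rightarrow> real ^ ('s \<times> 'a)" where
  "occ P rho \<gamma> p = (\<chi> x. (\<Sum>t. \<gamma> ^ t * (state_dist P rho p t (fst x) * p $ x)))"

fun sa_dist :: "('s::finite \<Rightarrow> 'a::finite \<Rightarrow> 's \<Rightarrow> real) \<Rightarrow> real ^ ('s \<times> 'a)
    \<Rightarrow> 's \<times> 'a \<Rightarrow> nat \<Rightarrow> 's \<times> 'a \<Rightarrow> real" where
  "sa_dist P p x0 0 = (\<lambda>x. if x = x0 then 1 else 0)"
| "sa_dist P p x0 (Suc t) =
     (\<lambda>(s', a'). \<Sum>x\<in>UNIV. sa_dist P p x0 t x * P (fst x) (snd x) s' * p $ (s', a'))"

definition Qfun :: "('s::finite \<Rightarrow> 'a::finite \<Rightarrow> 's \<Rightarrow> real) \<Rightarrow> real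
    \<Rightarrow> real ^ ('s \<times> 'a) \<Rightarrow> real ^ ('s \<times> 'a) \<Rightarrow> real ^ ('s \<times> 'a)" where
  "Qfun P \<gamma> p u = (\<chi> x0. (\<Sum>t. \<gamma> ^ t * (\<Sum>x\<in>UNIV. sa_dist P p x0 t x * u $ x)))"

definition occ_set :: "('s::finite \<Rightarrow> 'a::finite \<Rightarrow> 's \<Rightarrow> real) \<Rightarrow> ('s \<Rightarrow> real) \<Rightarrow> real
    \<Rightarrow> (real ^ ('s \<times> 'a)) set" where
  "occ_set P rho \<gamma> = occ P rho \<gamma> ` policies"

definition grad :: "(real ^ 'n::finite \<Rightarrow> real) \<Rightarrow> real ^ 'n \<Rightarrow> real ^ 'n" where
  "grad F mu = (\<chi> i. frechet_derivative F (at mu) (axis i 1))"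

definition pseudo_reward where
  "pseudo_reward P rho \<gamma> F p = grad F (occ P rho \<gamma> p)"

definition pqa_step :: "('s::finite \<Rightarrow> 'a::finite \<Rightarrow> 's \<Rightarrow> real) \<Rightarrow> ('s \<Rightarrow> real) \<Rightarrow> real
    \<Rightarrow> (real ^ ('s \<times> 'a) \<Rightarrow> real) \<Rightarrow> real \<Rightarrow> real ^ ('s \<times> 'a) \<Rightarrow> real ^ ('s \<times> 'a)" where
  "pqa_step P rho \<gamma> F \<eta> p =
     (let Q = Qfun P \<gamma> p (pseudo_reward P rho \<gamma> F p) in
      \<chi> x. closest_point prob_simplex (\<chi> b. p $ (fst x, b) + \<eta> * Q $ (fst x, b)) $ snd x)"

end

theory Submission
  imports Defs
begin

text \<open>Write \<open>d\<^sup>p\<close> for the discounted state occupancy of a policy \<open>p\<close>, so that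
  \<open>\<mu>\<^sup>p(s,a) = d\<^sup>p(s) p(a|s)\<close>. By the performance difference lemma, the derivative of
  \<open>G(\<pi>) = F(\<mu>\<^sup>\<pi>)\<close> at \<open>p\<close> in direction \<open>v - p\<close> is
  \<open>\<Sum>\<^sub>s d\<^sup>p(s) \<langle>v(\<cdot>|s) - p(\<cdot>|s), Q\<^sup>p\<^sub>\<Gamma>(s,\<cdot>)\<rangle>\<close>, so a projected Q-ascent step is a proximal
  gradient step for the \<open>d\<^sup>p\<close>-weighted Euclidean norm. As \<open>d\<^sup>p \<ge> \<rho> \<ge> \<rho>\<^sub>m\<^sub>i\<^sub>n\<close>, this norm
  dominates the quadratic term of \<open>L\<close>-smoothness when \<open>\<eta> = \<rho>\<^sub>m\<^sub>i\<^sub>n/L\<close>, and the step satisfies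
  \<open>G(v) - G(p\<^sup>+) \<le> (L/\<rho>\<^sub>m\<^sub>i\<^sub>n) \<Sum>\<^sub>s d\<^sup>p(s) \<parallel>v(\<cdot>|s) - p(\<cdot>|s)\<parallel>\<^sup>2\<close> for every policy \<open>v\<close>.
  Choosing for \<open>v\<close> the policy whose occupancy measure is \<open>(1-\<alpha>)\<mu>\<^sup>\<pi>\<^sup>k + \<alpha>\<mu>\<^sup>\<pi>\<^sup>*\<close> (the set of
  occupancy measures is convex and \<open>F\<close> is concave on it) gives
  \<open>\<Delta>\<^sub>k\<^sub>+\<^sub>1 \<le> (1-\<alpha>)\<Delta>\<^sub>k + 4L\<alpha>\<^sup>2/((1-\<gamma>)\<rho>\<^sub>m\<^sub>i\<^sub>n)\<^sup>2\<close> for the gaps \<open>\<Delta>\<^sub>k = G(\<pi>\<^sup>*) - G(\<pi>\<^sub>k)\<close> and all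
  \<open>\<alpha> \<le> 1/2\<close>; taking \<open>\<alpha>\<close> proportional to the current gap turns this into an \<open>O(1/K)\<close> rate.\<close>

lemma sum_UNIV_prod:
  "(\<Sum>x\<in>UNIV. f x) = (\<Sum>s\<in>UNIV. \<Sum>a\<in>UNIV. f (s, a))"
  for f :: "'s::finite \<times> 'a::finite \<Rightarrow> 'b::comm_monoid_add"
  by (simp add: UNIV_Times_UNIV[symmetric] sum.cartesian_product del: UNIV_Times_UNIV)

lemma sum_swap3:
  "(\<Sum>x\<in>UNIV. \<Sum>y\<in>UNIV. \<Sum>z\<in>UNIV. f x y z) = (\<Sum>z\<in>UNIV. \<Sum>x\<in>UNIV. \<Sum>y\<in>UNIV. f x y z)"
  for f :: "'x::finite \<Rightarrow> 'y::finite \<Rightarrow> 'z::finite \<Rightarrow> 'b::comm_monoid_add"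
  by (simp add: sum.swap[of _ "UNIV :: 'z set"])

lemma norm_sq_vec: "(norm v)\<^sup>2 = (\<Sum>i\<in>UNIV. (v $ i)\<^sup>2)"
  for v :: "real ^ 'n::finite"
  unfolding power2_norm_eq_inner inner_vec_def by (simp add: power2_eq_square)

lemma frechet_derivative_eq_inner_grad:
  fixes F :: "real ^ 'n::finite \<Rightarrow> real"
  assumes "F differentiable (at mu)"
  shows "frechet_derivative F (at mu) v = grad F mu \<bullet> v"
proof -
  have lin: "linear (frechet_derivative F (at mu))"
    by (rule linear_frechet_derivative[OF assms])
  have "frechet_derivative F (at mu) v = frechet_derivative F (at mu) (\<Sum>i\<in>UNIV. v $ i *\<^sub>R axis i 1)"
    using basis_expansion[of v] by (simp add: scalar_mult_eq_scaleR)
  also have "\<dots> = (\<Sum>i\<in>UNIV. v $ i * frechet_derivative F (at mu) (axis i 1))"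
    by (simp add: linear_sum[OF lin] linear_scale[OF lin])
  finally show ?thesis
    by (simp add: grad_def inner_vec_def mult.commute)
qed

lemma has_derivative_remainder_along_path:
  fixes f :: "'a::real_normed_vector \<Rightarrow> 'b::real_normed_vector"
  assumes f: "(f has_derivative f') (at x)"
    and c: "\<forall>\<^sub>F t in at_right 0. norm (c t - x) \<le> C * t"
  shows "((\<lambda>t. (f (c t) - f x - f' (c t - x)) /\<^sub>R t) \<longlongrightarrow> 0) (at_right 0)"
proof (rule tendstoI)
  fix e :: real
  assume "0 < e"
  define e' where "e' = e / (2 * (\<bar>C\<bar> + 1))"
  have "0 < e'"
    using \<open>0 < e\<close> by (simp add: e'_def add_nonneg_pos)
  then obtain d where "0 < d"
    and d: "\<And>y. norm (y - x) < d \<Longrightarrow> norm (f y - f x - f' (y - x)) \<le> e' * norm (y - x)"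
    using f unfolding has_derivative_at_alt by blast
  have "\<forall>\<^sub>F t in at_right 0. t \<in> {0<..<d / (\<bar>C\<bar> + 1)}"
    using \<open>0 < d\<close> by (intro eventually_at_right_real) (simp add: add_nonneg_pos)
  with c show "\<forall>\<^sub>F t in at_right 0. dist ((f (c t) - f x - f' (c t - x)) /\<^sub>R t) 0 < e"
  proof eventually_elim
    case (elim t)
    then have t: "0 < t" "(\<bar>C\<bar> + 1) * t < d"
      by (auto simp: field_simps add_nonneg_pos)
    have near: "norm (c t - x) \<le> \<bar>C\<bar> * t"
      using elim(1) t(1) abs_ge_self[of C] by (meson mult_right_mono less_imp_le order_trans)
    then have "norm (c t - x) < d"
      using t by (simp add: distrib_right)
    then have "norm (f (c t) - f x - f' (c t - x)) \<le> e' * (\<bar>C\<bar> * t)"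
      using d near \<open>0 < e'\<close> by (meson mult_left_mono less_imp_le order_trans)
    then have "norm (f (c t) - f x - f' (c t - x)) / t \<le> e' * \<bar>C\<bar>"
      using t(1) by (simp add: pos_divide_le_eq mult_ac)
    then have "dist ((f (c t) - f x - f' (c t - x)) /\<^sub>R t) 0 \<le> e' * \<bar>C\<bar>"
      using t(1) by (simp add: divide_inverse_commute)
    also have "e' * \<bar>C\<bar> < e"
      using \<open>0 < e\<close> by (simp add: e'_def field_simps add_nonneg_pos)
    finally show ?case .
  qed
qed

lemma tendsto_difference_quotient_at_right:
  fixes \<phi> :: "real \<Rightarrow> real"
  assumes "\<And>t. 0 < t \<Longrightarrow> t \<le> 1 \<Longrightarrow> \<bar>\<phi> t - \<phi> 0 - t * a\<bar> \<le> C * t\<^sup>2"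
  shows "((\<lambda>t. (\<phi> t - \<phi> 0) / t) \<longlongrightarrow> a) (at_right 0)"
  unfolding Lim_null[of _ a]
proof (rule Lim_null_comparison)
  have "\<forall>\<^sub>F t in at_right 0. t \<in> {0<..<1::real}"
    by (rule eventually_at_right_real) simp
  then show "\<forall>\<^sub>F t in at_right 0. norm ((\<phi> t - \<phi> 0) / t - a) \<le> C * t"
  proof eventually_elim
    case (elim t)
    then have "\<bar>\<phi> t - \<phi> 0 - t * a\<bar> / t \<le> C * t"
      using assms[of t] by (simp add: pos_divide_le_eq power2_eq_square mult.assoc)
    moreover have "(\<phi> t - \<phi> 0) / t - a = (\<phi> t - \<phi> 0 - t * a) / t"
      using elim by (simp add: field_simps)
    ultimately show ?case
      using elim by simp
  qed
  show "((\<lambda>t. C * t) \<longlongrightarrow> 0) (at_right 0)"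
    by (intro tendsto_eq_intros) auto
qed

lemma closest_point_ascent_ineq:
  fixes x g v :: "'a::{real_inner,heine_borel}"
  assumes "closed S" "v \<in> S" "0 < \<eta>"
  defines "y \<equiv> closest_point S (x + \<eta> *\<^sub>R g)"
  shows "inner (v - x) g - (norm (v - x))\<^sup>2 / (2 * \<eta>)
           \<le> inner (y - x) g - (norm (y - x))\<^sup>2 / (2 * \<eta>)"
proof -
  have expand: "(norm (x + \<eta> *\<^sub>R g - w))\<^sup>2
      = \<eta>\<^sup>2 * (norm g)\<^sup>2 - 2 * \<eta> * inner (w - x) g + (norm (w - x))\<^sup>2" for w
    unfolding power2_norm_eq_inner
    by (simp add: inner_diff_left inner_diff_right inner_add_left inner_add_right inner_commute
        power2_eq_square algebra_simps)
  have "dist (x + \<eta> *\<^sub>R g) y \<le> dist (x + \<eta> *\<^sub>R g) v"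
    unfolding y_def by (rule closest_point_le[OF assms(1,2)])
  then have "(norm (x + \<eta> *\<^sub>R g - y))\<^sup>2 \<le> (norm (x + \<eta> *\<^sub>R g - v))\<^sup>2"
    by (simp add: dist_norm power_mono)
  then have "(norm (y - x))\<^sup>2 - 2 * \<eta> * inner (y - x) g \<le> (norm (v - x))\<^sup>2 - 2 * \<eta> * inner (v - x) g"
    unfolding expand by linarith
  then have "(2 * \<eta> * inner (v - x) g - (norm (v - x))\<^sup>2) / (2 * \<eta>)
      \<le> (2 * \<eta> * inner (y - x) g - (norm (y - x))\<^sup>2) / (2 * \<eta>)"
    using \<open>0 < \<eta>\<close> by (intro divide_right_mono) auto
  with \<open>0 < \<eta>\<close> show ?thesis
    by (simp add: diff_divide_distrib)
qed

lemma quadratic_decrease_of_recursive_bound: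
  fixes x y c :: real
  assumes c: "0 < c" and x: "0 \<le> x" "x \<le> c / 4"
    and step: "\<And>\<alpha>. 0 \<le> \<alpha> \<Longrightarrow> \<alpha> \<le> 1 / 2 \<Longrightarrow> y \<le> (1 - \<alpha>) * x + c / 4 * \<alpha>\<^sup>2"
  shows "y \<le> x - x\<^sup>2 / c"
proof -
  have "y \<le> (1 - 2 * x / c) * x + c / 4 * (2 * x / c)\<^sup>2"
    using step[of "2 * x / c"] x c by (simp add: field_simps)
  also have "\<dots> = x - x\<^sup>2 / c"
    using c by (simp add: field_simps power2_eq_square)
  finally show ?thesis .
qed

lemma inverse_rate_of_quadratic_decrease:
  fixes y :: "nat \<Rightarrow> real"
  assumes c: "0 < c" and nonneg: "\<And>k. 0 \<le> y k" and start: "y 0 \<le> c / 2"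
    and step: "\<And>k. y (Suc k) \<le> y k - (y k)\<^sup>2 / c"
  shows "y n \<le> c / (n + 2)"
proof (induction n)
  case 0
  show ?case
    using start by simp
next
  case (Suc n)
  define g where "g x = x - x\<^sup>2 / c" for x
  have g_mono: "g x \<le> g z" if "0 \<le> x" "x \<le> z" "z \<le> c / 2" for x z
  proof -
    have "(z - x) * (x + z) \<le> (z - x) * c"
      using that by (intro mult_left_mono) auto
    then have "z\<^sup>2 - x\<^sup>2 \<le> (z - x) * c"
      by (simp add: power2_eq_square algebra_simps)
    then have "(z\<^sup>2 - x\<^sup>2) / c \<le> z - x"
      using c by (simp add: pos_divide_le_eq)
    then show ?thesis
      unfolding g_def diff_divide_distrib by linarith
  qed
  have g_inverse: "g (c / m) \<le> c / (m + 1)" if "1 \<le> m" for m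
  proof -
    have "g (c / m) - c / (m + 1) = - c / (m\<^sup>2 * (m + 1))"
      using c that by (simp add: g_def field_simps power2_eq_square)
    also have "\<dots> \<le> 0"
      using c that by (simp add: divide_nonneg_pos)
    finally show ?thesis
      by simp
  qed
  have "c / (n + 2) \<le> c / 2"
    using c by (intro divide_left_mono) auto
  then have "y (Suc n) \<le> g (c / (n + 2))"
    using step[of n] g_mono[OF nonneg Suc.IH] by (simp add: g_def)
  also have "\<dots> \<le> c / (Suc n + 2)"
    using g_inverse[of "n + 2"] by (simp add: add.commute add.left_commute)
  finally show ?case .
qed

section \<open>Policies\<close>

lemma closed_prob_simplex: "closed (prob_simplex :: (real ^ 'a::finite) set)"
  unfolding prob_simplex_def
  by (intro closed_Collect_conj closed_Collect_all closed_Collect_le closed_Collect_eq continuous_intros)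

lemma prob_simplex_nonempty: "(prob_simplex :: (real ^ 'a::finite) set) \<noteq> {}"
proof -
  have "axis undefined 1 \<in> (prob_simplex :: (real ^ 'a) set)"
    by (simp add: prob_simplex_def axis_def sum.delta')
  then show ?thesis by blast
qed

lemma convex_prob_simplex: "convex (prob_simplex :: (real ^ 'a::finite) set)"
  unfolding prob_simplex_def convex_def
  by (auto simp: sum.distrib sum_distrib_left[symmetric])

lemma policiesD:
  assumes "p \<in> policies"
  shows policy_nonneg: "0 \<le> p $ (s, a)" and sum_policy_row: "(\<Sum>a\<in>UNIV. p $ (s, a)) = 1"
  using assms by (auto simp: policies_def prob_simplex_def)

lemma policy_le_1:
  assumes "p \<in> policies" shows "p $ (s, a) \<le> 1"
  using member_le_sum[of a UNIV "\<lambda>b. p $ (s, b)"] policiesD[OF assms] by simp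

lemma policy_row_in_prob_simplex: "p \<in> policies \<Longrightarrow> (\<chi> a. p $ (s, a)) \<in> prob_simplex"
  by (simp add: policies_def)

lemma convex_policies: "convex (policies :: (real ^ ('s::finite \<times> 'a::finite)) set)"
proof (rule convexI)
  fix p q :: "real ^ ('s \<times> 'a)" and u v :: real
  assume "p \<in> policies" "q \<in> policies" "0 \<le> u" "0 \<le> v" "u + v = 1"
  then have "u *\<^sub>R (\<chi> a. p $ (s, a)) + v *\<^sub>R (\<chi> a. q $ (s, a)) \<in> prob_simplex" for s
    by (intro convexD[OF convex_prob_simplex] policy_row_in_prob_simplex)
  moreover have "(\<chi> a. (u *\<^sub>R p + v *\<^sub>R q) $ (s, a))
      = u *\<^sub>R (\<chi> a. p $ (s, a)) + v *\<^sub>R (\<chi> a. q $ (s, a))" for s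
    by (simp add: vec_eq_iff)
  ultimately show "u *\<^sub>R p + v *\<^sub>R q \<in> policies"
    by (simp add: policies_def)
qed

lemma policy_segment_in_policies:
  assumes "p \<in> policies" "q \<in> policies" "0 \<le> t" "t \<le> 1"
  shows "p + t *\<^sub>R (q - p) \<in> policies"
proof -
  have "p + t *\<^sub>R (q - p) = (1 - t) *\<^sub>R p + t *\<^sub>R q"
    by (simp add: algebra_simps)
  then show ?thesis
    using convexD[OF convex_policies assms(1,2), of "1 - t" t] assms(3,4) by simp
qed

lemma policy_row_l1_dist_le_2:
  assumes p: "p \<in> policies" and q: "q \<in> policies"
  shows "(\<Sum>a\<in>UNIV. \<bar>p $ (s, a) - q $ (s, a)\<bar>) \<le> 2"
proof -
  have "(\<Sum>a\<in>UNIV. \<bar>p $ (s, a) - q $ (s, a)\<bar>) \<le> (\<Sum>a\<in>UNIV. p $ (s, a) + q $ (s, a))"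
    using policy_nonneg[OF p] policy_nonneg[OF q] by (intro sum_mono) (simp add: abs_le_iff)
  also have "\<dots> = 2"
    using sum_policy_row[OF p] sum_policy_row[OF q] by (simp add: sum.distrib)
  finally show ?thesis .
qed

lemma policy_row_sq_dist_le_2:
  assumes p: "p \<in> policies" and q: "q \<in> policies"
  shows "(\<Sum>a\<in>UNIV. (p $ (s, a) - q $ (s, a))\<^sup>2) \<le> 2"
proof -
  have "(p $ (s, a) - q $ (s, a))\<^sup>2 \<le> \<bar>p $ (s, a) - q $ (s, a)\<bar>" for a
  proof -
    have "\<bar>p $ (s, a) - q $ (s, a)\<bar> \<le> 1"
      using policy_nonneg[OF p, of s a] policy_nonneg[OF q, of s a]
        policy_le_1[OF p, of s a] policy_le_1[OF q, of s a]
      by (simp add: abs_le_iff)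
    then show ?thesis
      by (metis abs_ge_zero mult_left_le power2_abs power2_eq_square)
  qed
  then have "(\<Sum>a\<in>UNIV. (p $ (s, a) - q $ (s, a))\<^sup>2) \<le> (\<Sum>a\<in>UNIV. \<bar>p $ (s, a) - q $ (s, a)\<bar>)"
    by (intro sum_mono)
  then show ?thesis using policy_row_l1_dist_le_2[OF p q, of s] by linarith
qed

lemma pqa_step_in_policies: "pqa_step P rho \<gamma> F \<eta> p \<in> policies"
proof -
  have "(\<chi> a. pqa_step P rho \<gamma> F \<eta> p $ (s, a))
      = closest_point prob_simplex
          (\<chi> b. p $ (s, b) + \<eta> * Qfun P \<gamma> p (pseudo_reward P rho \<gamma> F p) $ (s, b))" for s
    by (simp add: pqa_step_def Let_def vec_eq_iff)
  then show ?thesis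
    by (simp add: policies_def closest_point_in_set[OF closed_prob_simplex prob_simplex_nonempty])
qed

lemma pqa_step_row_ascent:
  fixes P :: "'s::finite \<Rightarrow> 'a::finite \<Rightarrow> 's \<Rightarrow> real" and rho \<gamma> F \<eta> and p :: "real ^ ('s \<times> 'a)"
  assumes v: "v \<in> policies" and \<eta>: "0 < \<eta>"
  defines "p' \<equiv> pqa_step P rho \<gamma> F \<eta> p" and "Q \<equiv> Qfun P \<gamma> p (pseudo_reward P rho \<gamma> F p)"
  shows "(\<Sum>a\<in>UNIV. (v $ (s, a) - p $ (s, a)) * Q $ (s, a)) - (\<Sum>a\<in>UNIV. (v $ (s, a) - p $ (s, a))\<^sup>2) / (2 * \<eta>)
       \<le> (\<Sum>a\<in>UNIV. (p' $ (s, a) - p $ (s, a)) * Q $ (s, a)) - (\<Sum>a\<in>UNIV. (p' $ (s, a) - p $ (s, a))\<^sup>2) / (2 * \<eta>)"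
proof -
  define x where "x = (\<chi> b. p $ (s, b))"
  define g where "g = (\<chi> b. Q $ (s, b))"
  have xg: "x + \<eta> *\<^sub>R g = (\<chi> b. p $ (s, b) + \<eta> * Q $ (s, b))"
    by (simp add: x_def g_def vec_eq_iff)
  have "closest_point prob_simplex (x + \<eta> *\<^sub>R g) = (\<chi> b. p' $ (s, b))"
    unfolding xg by (simp add: p'_def Q_def pqa_step_def Let_def vec_eq_iff)
  then have "inner ((\<chi> b. v $ (s, b)) - x) g - (norm ((\<chi> b. v $ (s, b)) - x))\<^sup>2 / (2 * \<eta>)
      \<le> inner ((\<chi> b. p' $ (s, b)) - x) g - (norm ((\<chi> b. p' $ (s, b)) - x))\<^sup>2 / (2 * \<eta>)"
    using closest_point_ascent_ineq[OF closed_prob_simplex policy_row_in_prob_simplex[OF v, of s] \<eta>, of x g]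
    by simp
  then show ?thesis
    by (simp add: inner_vec_def norm_sq_vec x_def g_def)
qed

section \<open>Occupancy measures\<close>

locale mdp =
  fixes P :: "'s::finite \<Rightarrow> 'a::finite \<Rightarrow> 's \<Rightarrow> real" and rho :: "'s \<Rightarrow> real" and \<gamma> :: real
  assumes kernel: "is_kernel P" and init: "is_distribution rho"
    and discount_nonneg: "0 \<le> \<gamma>" and discount_less_1: "\<gamma> < 1"
begin

lemma P_nonneg: "0 \<le> P s a s'"
  using kernel by (simp add: is_kernel_def)

lemma sum_P: "(\<Sum>s'\<in>UNIV. P s a s') = 1"
  using kernel by (simp add: is_kernel_def)

lemma rho_nonneg: "0 \<le> rho s"
  using init by (simp add: is_distribution_def)

lemma sum_rho: "(\<Sum>s\<in>UNIV. rho s) = 1"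
  using init by (simp add: is_distribution_def)

lemma rho_le_1: "rho s \<le> 1"
  using member_le_sum[of s UNIV rho] rho_nonneg sum_rho by simp

lemma summable_discounted:
  assumes "\<And>t. \<bar>f t\<bar> \<le> B"
  shows "summable (\<lambda>t. \<gamma> ^ t * f t)"
proof (rule summable_comparison_test'[where g = "\<lambda>t. B * \<gamma> ^ t"])
  show "summable (\<lambda>t. B * \<gamma> ^ t)"
    using discount_nonneg discount_less_1 by (intro summable_mult summable_geometric) simp
  show "norm (\<gamma> ^ t * f t) \<le> B * \<gamma> ^ t" for t
    using mult_left_mono[OF assms[of t], of "\<gamma> ^ t"] discount_nonneg
    by (simp add: abs_mult mult.commute)
qed

lemma state_dist_nonneg: "p \<in> policies \<Longrightarrow> 0 \<le> state_dist P rho p t s"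
  by (induction t arbitrary: s)
     (auto intro!: sum_nonneg mult_nonneg_nonneg rho_nonneg P_nonneg policy_nonneg)

lemma sum_state_dist: "p \<in> policies \<Longrightarrow> (\<Sum>s\<in>UNIV. state_dist P rho p t s) = 1"
proof (induction t)
  case 0
  then show ?case by (simp add: sum_rho)
next
  case (Suc t)
  have "(\<Sum>s'\<in>UNIV. state_dist P rho p (Suc t) s')
      = (\<Sum>s\<in>UNIV. \<Sum>s'\<in>UNIV. \<Sum>a\<in>UNIV. state_dist P rho p t s * p $ (s, a) * P s a s')"
    unfolding state_dist.simps by (rule sum.swap)
  also have "\<dots> = (\<Sum>s\<in>UNIV. \<Sum>a\<in>UNIV. \<Sum>s'\<in>UNIV. state_dist P rho p t s * p $ (s, a) * P s a s')"
    by (intro sum.cong refl sum.swap)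
  also have "\<dots> = (\<Sum>s\<in>UNIV. state_dist P rho p t s * (\<Sum>a\<in>UNIV. p $ (s, a)))"
    by (simp add: sum_distrib_left[symmetric] sum_P)
  also have "\<dots> = 1"
    using Suc by (simp add: sum_policy_row)
  finally show ?case .
qed

lemma state_dist_le_1: "p \<in> policies \<Longrightarrow> state_dist P rho p t s \<le> 1"
  using member_le_sum[of s UNIV "state_dist P rho p t"] state_dist_nonneg sum_state_dist by simp

definition state_occ :: "real ^ ('s \<times> 'a) \<Rightarrow> 's \<Rightarrow> real" where
  "state_occ p s = (\<Sum>t. \<gamma> ^ t * state_dist P rho p t s)"

lemma summable_state_dist: "p \<in> policies \<Longrightarrow> summable (\<lambda>t. \<gamma> ^ t * state_dist P rho p t s)"
  by (rule summable_discounted[where B = 1]) (simp add: state_dist_nonneg state_dist_le_1)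

lemma state_occ_nonneg: "p \<in> policies \<Longrightarrow> 0 \<le> state_occ p s"
  unfolding state_occ_def using discount_nonneg
  by (intro suminf_nonneg summable_state_dist) (simp_all add: state_dist_nonneg)

lemma sum_state_occ: "p \<in> policies \<Longrightarrow> (\<Sum>s\<in>UNIV. state_occ p s) = 1 / (1 - \<gamma>)"
proof -
  assume p: "p \<in> policies"
  have "(\<Sum>s\<in>UNIV. state_occ p s) = (\<Sum>t. \<Sum>s\<in>UNIV. \<gamma> ^ t * state_dist P rho p t s)"
    unfolding state_occ_def by (rule suminf_sum[symmetric]) (rule summable_state_dist[OF p])
  also have "\<dots> = (\<Sum>t. \<gamma> ^ t)"
    by (simp add: sum_distrib_left[symmetric] sum_state_dist[OF p])
  also have "\<dots> = 1 / (1 - \<gamma>)"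
    using discount_nonneg discount_less_1 by (simp add: suminf_geometric)
  finally show ?thesis .
qed

lemma state_occ_le: "p \<in> policies \<Longrightarrow> state_occ p s \<le> 1 / (1 - \<gamma>)"
  using member_le_sum[of s UNIV "state_occ p"] state_occ_nonneg sum_state_occ by simp

lemma occ_eq_state_occ: "p \<in> policies \<Longrightarrow> occ P rho \<gamma> p $ (s, a) = state_occ p s * p $ (s, a)"
  unfolding occ_def state_occ_def
  by (simp add: suminf_mult2[OF summable_state_dist] mult.assoc)

lemma sum_occ_row: "p \<in> policies \<Longrightarrow> (\<Sum>a\<in>UNIV. occ P rho \<gamma> p $ (s, a)) = state_occ p s"
  by (simp add: occ_eq_state_occ sum_distrib_left[symmetric] sum_policy_row)

lemma state_occ_flow:
  assumes p: "p \<in> policies"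
  shows "state_occ p s' = rho s' + \<gamma> * (\<Sum>s\<in>UNIV. \<Sum>a\<in>UNIV. state_occ p s * p $ (s, a) * P s a s')"
proof -
  define w where "w t s a = \<gamma> ^ t * state_dist P rho p t s * (p $ (s, a) * P s a s')" for t s a
  have w: "summable (\<lambda>t. w t s a)" for s a
    unfolding w_def by (intro summable_mult2 summable_state_dist[OF p])
  have suminf_w: "(\<Sum>t. w t s a) = state_occ p s * p $ (s, a) * P s a s'" for s a
    unfolding w_def state_occ_def mult.assoc[of "suminf _"]
    by (rule suminf_mult2[symmetric, OF summable_state_dist[OF p]])
  have "state_occ p s' = rho s' + (\<Sum>t. \<gamma> ^ Suc t * state_dist P rho p (Suc t) s')"
    using suminf_split_head[OF summable_state_dist[OF p, of s']] by (simp add: state_occ_def)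
  also have "(\<Sum>t. \<gamma> ^ Suc t * state_dist P rho p (Suc t) s')
      = (\<Sum>t. \<gamma> * (\<Sum>s\<in>UNIV. \<Sum>a\<in>UNIV. w t s a))"
    by (simp add: w_def sum_distrib_left mult_ac)
  also have "\<dots> = \<gamma> * (\<Sum>t. \<Sum>s\<in>UNIV. \<Sum>a\<in>UNIV. w t s a)"
    by (intro suminf_mult summable_sum w)
  also have "(\<Sum>t. \<Sum>s\<in>UNIV. \<Sum>a\<in>UNIV. w t s a) = (\<Sum>s\<in>UNIV. \<Sum>t. \<Sum>a\<in>UNIV. w t s a)"
    by (intro suminf_sum summable_sum w)
  also have "\<dots> = (\<Sum>s\<in>UNIV. \<Sum>a\<in>UNIV. \<Sum>t. w t s a)"
    by (intro sum.cong refl suminf_sum w)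
  finally show ?thesis
    by (simp add: suminf_w)
qed

lemma state_occ_ge_rho: "p \<in> policies \<Longrightarrow> rho s \<le> state_occ p s"
  using state_occ_flow[of p s] discount_nonneg
  by (simp add: sum_nonneg state_occ_nonneg policy_nonneg P_nonneg)

section \<open>Action values and performance difference\<close>

lemma sa_dist_Suc:
  "sa_dist P p x0 (Suc t) (s', a') = (\<Sum>x\<in>UNIV. sa_dist P p x0 t x * P (fst x) (snd x) s' * p $ (s', a'))"
  by simp

lemma sa_dist_nonneg: "p \<in> policies \<Longrightarrow> 0 \<le> sa_dist P p x0 t x"
proof (induction t arbitrary: x)
  case (Suc t)
  then show ?case
    by (cases x) (auto intro!: sum_nonneg mult_nonneg_nonneg P_nonneg policy_nonneg)
qed simp

lemma sum_sa_dist: "p \<in> policies \<Longrightarrow> (\<Sum>x\<in>UNIV. sa_dist P p x0 t x) = 1"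
proof (induction t)
  case (Suc t)
  have "(\<Sum>x\<in>UNIV. sa_dist P p x0 (Suc t) x)
      = (\<Sum>s'\<in>UNIV. \<Sum>a'\<in>UNIV. \<Sum>x\<in>UNIV. sa_dist P p x0 t x * P (fst x) (snd x) s' * p $ (s', a'))"
    by (simp only: sum_UNIV_prod[of "sa_dist P p x0 (Suc t)"] sa_dist_Suc)
  also have "\<dots> = (\<Sum>x\<in>UNIV. \<Sum>s'\<in>UNIV. \<Sum>a'\<in>UNIV. sa_dist P p x0 t x * P (fst x) (snd x) s' * p $ (s', a'))"
    by (rule sum_swap3)
  also have "\<dots> = (\<Sum>x\<in>UNIV. sa_dist P p x0 t x)"
    using Suc.prems by (simp add: sum_distrib_left[symmetric] sum_policy_row sum_P)
  finally show ?case using Suc by simp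
qed simp

lemma sa_dist_le_1: "p \<in> policies \<Longrightarrow> sa_dist P p x0 t x \<le> 1"
  using member_le_sum[of x UNIV "sa_dist P p x0 t"] sa_dist_nonneg sum_sa_dist by simp

text \<open>The recursion defining \<open>sa_dist\<close> extends paths at the end; this unfolds them at the start.\<close>

lemma sa_dist_Suc_first:
  "sa_dist P p x0 (Suc t) x = (\<Sum>y\<in>UNIV. P (fst x0) (snd x0) (fst y) * p $ y * sa_dist P p y t x)"
proof (induction t arbitrary: x)
  case 0
  show ?case
    by (cases x) (simp add: mult_delta_left mult_delta_right mult.assoc)
next
  case (Suc t)
  obtain s' a' where x: "x = (s', a')" by fastforce
  have "sa_dist P p x0 (Suc (Suc t)) x
      = (\<Sum>z\<in>UNIV. \<Sum>y\<in>UNIV. P (fst x0) (snd x0) (fst y) * p $ y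
           * (sa_dist P p y t z * P (fst z) (snd z) s' * p $ (s', a')))"
    unfolding x sa_dist_Suc Suc.IH by (simp add: sum_distrib_right mult.assoc)
  also have "\<dots> = (\<Sum>y\<in>UNIV. \<Sum>z\<in>UNIV. P (fst x0) (snd x0) (fst y) * p $ y
           * (sa_dist P p y t z * P (fst z) (snd z) s' * p $ (s', a')))"
    by (rule sum.swap)
  also have "\<dots> = (\<Sum>y\<in>UNIV. P (fst x0) (snd x0) (fst y) * p $ y * sa_dist P p y (Suc t) x)"
    unfolding x sa_dist_Suc by (simp add: sum_distrib_left)
  finally show ?case .
qed

lemma abs_sum_sa_dist_mult_le:
  assumes "p \<in> policies"
  shows "\<bar>\<Sum>x\<in>UNIV. sa_dist P p x0 t x * u $ x\<bar> \<le> (\<Sum>x\<in>UNIV. \<bar>u $ x\<bar>)"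
proof -
  have "\<bar>\<Sum>x\<in>UNIV. sa_dist P p x0 t x * u $ x\<bar> \<le> (\<Sum>x\<in>UNIV. \<bar>sa_dist P p x0 t x * u $ x\<bar>)"
    by (rule sum_abs)
  also have "\<dots> \<le> (\<Sum>x\<in>UNIV. \<bar>u $ x\<bar>)"
    using sa_dist_nonneg[OF assms] sa_dist_le_1[OF assms]
    by (intro sum_mono) (simp add: abs_mult mult_left_le_one_le)
  finally show ?thesis .
qed

lemma summable_Qfun:
  "p \<in> policies \<Longrightarrow> summable (\<lambda>t. \<gamma> ^ t * (\<Sum>x\<in>UNIV. sa_dist P p x0 t x * u $ x))"
  by (rule summable_discounted) (rule abs_sum_sa_dist_mult_le)

lemma Qfun_unfold:
  assumes p: "p \<in> policies"
  shows "Qfun P \<gamma> p u $ x0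
           = u $ x0 + \<gamma> * (\<Sum>y\<in>UNIV. P (fst x0) (snd x0) (fst y) * p $ y * Qfun P \<gamma> p u $ y)"
proof -
  define c where "c y = P (fst x0) (snd x0) (fst y) * p $ y" for y
  define r where "r y t = \<gamma> ^ t * (\<Sum>x\<in>UNIV. sa_dist P p y t x * u $ x)" for y t
  have r: "summable (r y)" for y
    unfolding r_def by (rule summable_Qfun[OF p])
  have Q: "Qfun P \<gamma> p u $ y = (\<Sum>t. r y t)" for y
    by (simp add: Qfun_def r_def)
  have r_Suc: "r x0 (Suc t) = \<gamma> * (\<Sum>y\<in>UNIV. c y * r y t)" for t
  proof -
    have "(\<Sum>x\<in>UNIV. sa_dist P p x0 (Suc t) x * u $ x)
        = (\<Sum>x\<in>UNIV. \<Sum>y\<in>UNIV. c y * (sa_dist P p y t x * u $ x))"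
      unfolding sa_dist_Suc_first c_def by (simp add: sum_distrib_right mult.assoc)
    also have "\<dots> = (\<Sum>y\<in>UNIV. c y * (\<Sum>x\<in>UNIV. sa_dist P p y t x * u $ x))"
      by (subst sum.swap) (simp add: sum_distrib_left)
    finally have "(\<Sum>x\<in>UNIV. sa_dist P p x0 (Suc t) x * u $ x)
        = (\<Sum>y\<in>UNIV. c y * (\<Sum>x\<in>UNIV. sa_dist P p y t x * u $ x))" .
    then show ?thesis
      by (simp add: r_def sum_distrib_left mult_ac)
  qed
  have "Qfun P \<gamma> p u $ x0 = r x0 0 + (\<Sum>t. r x0 (Suc t))"
    unfolding Q using suminf_split_head[OF r] by simp
  also have "r x0 0 = u $ x0"
    by (simp add: r_def mult_delta_left)
  also have "(\<Sum>t. r x0 (Suc t)) = \<gamma> * (\<Sum>t. \<Sum>y\<in>UNIV. c y * r y t)"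
    unfolding r_Suc by (intro suminf_mult summable_sum summable_mult r)
  also have "(\<Sum>t. \<Sum>y\<in>UNIV. c y * r y t) = (\<Sum>y\<in>UNIV. \<Sum>t. c y * r y t)"
    by (intro suminf_sum summable_mult r)
  also have "\<dots> = (\<Sum>y\<in>UNIV. c y * Qfun P \<gamma> p u $ y)"
    unfolding Q by (intro sum.cong refl suminf_mult r)
  finally show ?thesis
    by (simp add: c_def)
qed

definition value_fun :: "real ^ ('s \<times> 'a) \<Rightarrow> real ^ ('s \<times> 'a) \<Rightarrow> 's \<Rightarrow> real" where
  "value_fun p u s = (\<Sum>a\<in>UNIV. p $ (s, a) * Qfun P \<gamma> p u $ (s, a))"

lemma Qfun_bellman:
  assumes "p \<in> policies"
  shows "Qfun P \<gamma> p u $ (s, a) = u $ (s, a) + \<gamma> * (\<Sum>s'\<in>UNIV. P s a s' * value_fun p u s')"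
proof -
  have "(\<Sum>y\<in>UNIV. P s a (fst y) * p $ y * Qfun P \<gamma> p u $ y)
      = (\<Sum>s'\<in>UNIV. \<Sum>a'\<in>UNIV. P s a s' * p $ (s', a') * Qfun P \<gamma> p u $ (s', a'))"
    using sum_UNIV_prod[of "\<lambda>y. P s a (fst y) * p $ y * Qfun P \<gamma> p u $ y"] by simp
  also have "\<dots> = (\<Sum>s'\<in>UNIV. P s a s' * value_fun p u s')"
    by (simp add: value_fun_def sum_distrib_left mult_ac)
  finally show ?thesis
    using Qfun_unfold[OF assms, of u "(s, a)"] by simp
qed

lemma inner_occ_decomp:
  assumes p: "p \<in> policies" and q: "q \<in> policies"
  shows "u \<bullet> occ P rho \<gamma> p
     = (\<Sum>s\<in>UNIV. state_occ p s * (\<Sum>a\<in>UNIV. (p $ (s, a) - q $ (s, a)) * Qfun P \<gamma> q u $ (s, a)))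
       + (\<Sum>s\<in>UNIV. rho s * value_fun q u s)"
proof -
  define Q where "Q s a = Qfun P \<gamma> q u $ (s, a)" for s a
  define V where "V = value_fun q u"
  define m where "m s a = state_occ p s * p $ (s, a)" for s a
  have flow: "\<gamma> * (\<Sum>s\<in>UNIV. \<Sum>a\<in>UNIV. m s a * P s a s') = state_occ p s' - rho s'" for s'
    using state_occ_flow[OF p, of s'] unfolding m_def by linarith
  have "state_occ p s * (\<Sum>a\<in>UNIV. p $ (s, a) * Q s a)
      = (\<Sum>a\<in>UNIV. m s a * u $ (s, a)) + (\<Sum>a\<in>UNIV. \<Sum>s'\<in>UNIV. \<gamma> * (m s a * P s a s') * V s')"
    for s
  proof -
    have "state_occ p s * (\<Sum>a\<in>UNIV. p $ (s, a) * Q s a) = (\<Sum>a\<in>UNIV. m s a * Q s a)"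
      by (simp add: m_def sum_distrib_left mult.assoc)
    also have "\<dots> = (\<Sum>a\<in>UNIV. m s a * u $ (s, a) + (\<Sum>s'\<in>UNIV. \<gamma> * (m s a * P s a s') * V s'))"
      unfolding Q_def V_def Qfun_bellman[OF q]
      by (intro sum.cong refl) (simp add: distrib_left sum_distrib_left mult_ac)
    finally show ?thesis
      by (simp add: sum.distrib)
  qed
  then have "(\<Sum>s\<in>UNIV. state_occ p s * (\<Sum>a\<in>UNIV. p $ (s, a) * Q s a))
      = (\<Sum>s\<in>UNIV. \<Sum>a\<in>UNIV. m s a * u $ (s, a))
        + (\<Sum>s\<in>UNIV. \<Sum>a\<in>UNIV. \<Sum>s'\<in>UNIV. \<gamma> * (m s a * P s a s') * V s')"
    by (simp add: sum.distrib)
  also have "(\<Sum>s\<in>UNIV. \<Sum>a\<in>UNIV. m s a * u $ (s, a)) = u \<bullet> occ P rho \<gamma> p"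
    by (simp add: inner_vec_def sum_UNIV_prod[of "\<lambda>x. u $ x * _ x"] m_def occ_eq_state_occ[OF p]
        mult_ac)
  also have "(\<Sum>s\<in>UNIV. \<Sum>a\<in>UNIV. \<Sum>s'\<in>UNIV. \<gamma> * (m s a * P s a s') * V s')
      = (\<Sum>s'\<in>UNIV. (\<gamma> * (\<Sum>s\<in>UNIV. \<Sum>a\<in>UNIV. m s a * P s a s')) * V s')"
    unfolding sum_swap3[of "\<lambda>s a s'. \<gamma> * (m s a * P s a s') * V s'"]
    by (simp add: sum_distrib_left sum_distrib_right)
  also have "\<dots> = (\<Sum>s'\<in>UNIV. (state_occ p s' - rho s') * V s')"
    using flow by simp
  finally have "(\<Sum>s\<in>UNIV. state_occ p s * (\<Sum>a\<in>UNIV. p $ (s, a) * Q s a))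
      = u \<bullet> occ P rho \<gamma> p + (\<Sum>s\<in>UNIV. (state_occ p s - rho s) * V s)" .
  moreover have "V s = (\<Sum>a\<in>UNIV. q $ (s, a) * Q s a)" for s
    unfolding V_def Q_def value_fun_def ..
  ultimately show ?thesis
    unfolding Q_def[symmetric] V_def[symmetric]
    by (simp add: left_diff_distrib right_diff_distrib sum_subtractf sum_distrib_left)
qed

lemma performance_difference:
  assumes "p \<in> policies" "q \<in> policies"
  shows "u \<bullet> occ P rho \<gamma> p - u \<bullet> occ P rho \<gamma> q
     = (\<Sum>s\<in>UNIV. state_occ p s * (\<Sum>a\<in>UNIV. (p $ (s, a) - q $ (s, a)) * Qfun P \<gamma> q u $ (s, a)))"
  using inner_occ_decomp[OF assms, of u] inner_occ_decomp[OF assms(2,2), of u] by simp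

section \<open>Policy gradient\<close>

lemma sum_abs_occ_diff_le:
  assumes p: "p \<in> policies" and q: "q \<in> policies"
    and B: "\<And>s. (\<Sum>a\<in>UNIV. \<bar>p $ (s, a) - q $ (s, a)\<bar>) \<le> B"
  shows "(\<Sum>s\<in>UNIV. \<Sum>a\<in>UNIV. \<bar>occ P rho \<gamma> p $ (s, a) - occ P rho \<gamma> q $ (s, a)\<bar>)
           \<le> (\<Sum>s\<in>UNIV. \<bar>state_occ p s - state_occ q s\<bar>) + B / (1 - \<gamma>)"
proof -
  have split: "\<bar>occ P rho \<gamma> p $ (s, a) - occ P rho \<gamma> q $ (s, a)\<bar>
      \<le> \<bar>state_occ p s - state_occ q s\<bar> * p $ (s, a) + state_occ q s * \<bar>p $ (s, a) - q $ (s, a)\<bar>"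
    for s a
  proof -
    have "occ P rho \<gamma> p $ (s, a) - occ P rho \<gamma> q $ (s, a)
        = (state_occ p s - state_occ q s) * p $ (s, a) + state_occ q s * (p $ (s, a) - q $ (s, a))"
      by (simp add: occ_eq_state_occ p q algebra_simps)
    then have "\<bar>occ P rho \<gamma> p $ (s, a) - occ P rho \<gamma> q $ (s, a)\<bar>
        \<le> \<bar>(state_occ p s - state_occ q s) * p $ (s, a)\<bar> + \<bar>state_occ q s * (p $ (s, a) - q $ (s, a))\<bar>"
      by (simp add: abs_triangle_ineq)
    then show ?thesis
      using policy_nonneg[OF p, of s a] state_occ_nonneg[OF q, of s] by (simp add: abs_mult)
  qed
  have "(\<Sum>s\<in>UNIV. \<Sum>a\<in>UNIV. \<bar>occ P rho \<gamma> p $ (s, a) - occ P rho \<gamma> q $ (s, a)\<bar>)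
      \<le> (\<Sum>s\<in>UNIV. \<Sum>a\<in>UNIV.
           \<bar>state_occ p s - state_occ q s\<bar> * p $ (s, a) + state_occ q s * \<bar>p $ (s, a) - q $ (s, a)\<bar>)"
    by (intro sum_mono split)
  also have "\<dots> = (\<Sum>s\<in>UNIV. \<bar>state_occ p s - state_occ q s\<bar> * (\<Sum>a\<in>UNIV. p $ (s, a))
           + state_occ q s * (\<Sum>a\<in>UNIV. \<bar>p $ (s, a) - q $ (s, a)\<bar>))"
    by (simp add: sum.distrib sum_distrib_left)
  also have "\<dots> \<le> (\<Sum>s\<in>UNIV. \<bar>state_occ p s - state_occ q s\<bar> + state_occ q s * B)"
    by (intro sum_mono add_mono mult_left_mono B state_occ_nonneg[OF q]) (simp add: sum_policy_row p)
  also have "\<dots> = (\<Sum>s\<in>UNIV. \<bar>state_occ p s - state_occ q s\<bar>) + B / (1 - \<gamma>)"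
    by (simp add: sum.distrib sum_distrib_right[symmetric] sum_state_occ[OF q])
  finally show ?thesis .
qed

lemma state_occ_l1_dist_le:
  assumes p: "p \<in> policies" and q: "q \<in> policies"
    and B: "\<And>s. (\<Sum>a\<in>UNIV. \<bar>p $ (s, a) - q $ (s, a)\<bar>) \<le> B"
  shows "(\<Sum>s\<in>UNIV. \<bar>state_occ p s - state_occ q s\<bar>) \<le> \<gamma> * B / (1 - \<gamma>)\<^sup>2"
proof -
  define e where "e s = state_occ p s - state_occ q s" for s
  define c where "c s a = occ P rho \<gamma> p $ (s, a) - occ P rho \<gamma> q $ (s, a)" for s a
  have e_flow: "e s' = \<gamma> * (\<Sum>s\<in>UNIV. \<Sum>a\<in>UNIV. c s a * P s a s')" for s'
    unfolding e_def c_def using state_occ_flow[OF p, of s'] state_occ_flow[OF q, of s']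
    by (simp add: occ_eq_state_occ p q left_diff_distrib sum_subtractf right_diff_distrib)
  have "\<bar>e s'\<bar> \<le> \<gamma> * (\<Sum>s\<in>UNIV. \<Sum>a\<in>UNIV. \<bar>c s a\<bar> * P s a s')" for s'
  proof -
    have "\<bar>\<Sum>s\<in>UNIV. \<Sum>a\<in>UNIV. c s a * P s a s'\<bar> \<le> (\<Sum>s\<in>UNIV. \<Sum>a\<in>UNIV. \<bar>c s a * P s a s'\<bar>)"
      by (rule order_trans[OF sum_abs sum_mono[OF sum_abs]])
    then show ?thesis
      unfolding e_flow using discount_nonneg P_nonneg by (simp add: abs_mult mult_left_mono)
  qed
  then have "(\<Sum>s'\<in>UNIV. \<bar>e s'\<bar>) \<le> \<gamma> * (\<Sum>s'\<in>UNIV. \<Sum>s\<in>UNIV. \<Sum>a\<in>UNIV. \<bar>c s a\<bar> * P s a s')"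
    by (simp add: sum_distrib_left sum_mono)
  also have "(\<Sum>s'\<in>UNIV. \<Sum>s\<in>UNIV. \<Sum>a\<in>UNIV. \<bar>c s a\<bar> * P s a s') = (\<Sum>s\<in>UNIV. \<Sum>a\<in>UNIV. \<bar>c s a\<bar>)"
    unfolding sum_swap3[of "\<lambda>s a s'. \<bar>c s a\<bar> * P s a s'", symmetric]
    by (simp add: sum_distrib_left[symmetric] sum_P)
  finally have "(\<Sum>s\<in>UNIV. \<bar>e s\<bar>) \<le> \<gamma> * (\<Sum>s\<in>UNIV. \<Sum>a\<in>UNIV. \<bar>c s a\<bar>)" .
  moreover have "(\<Sum>s\<in>UNIV. \<Sum>a\<in>UNIV. \<bar>c s a\<bar>) \<le> (\<Sum>s\<in>UNIV. \<bar>e s\<bar>) + B / (1 - \<gamma>)"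
    unfolding c_def e_def by (rule sum_abs_occ_diff_le[OF p q B])
  ultimately have "(\<Sum>s\<in>UNIV. \<bar>e s\<bar>) \<le> \<gamma> * ((\<Sum>s\<in>UNIV. \<bar>e s\<bar>) + B / (1 - \<gamma>))"
    using discount_nonneg by (meson mult_left_mono order_trans)
  then have "(1 - \<gamma>) * (\<Sum>s\<in>UNIV. \<bar>e s\<bar>) \<le> \<gamma> * B / (1 - \<gamma>)"
    by (simp add: algebra_simps)
  then show ?thesis
    using discount_less_1 by (simp add: e_def pos_le_divide_eq power2_eq_square mult_ac)
qed

lemma norm_occ_diff_le:
  assumes p: "p \<in> policies" and q: "q \<in> policies"
    and B: "\<And>s. (\<Sum>a\<in>UNIV. \<bar>p $ (s, a) - q $ (s, a)\<bar>) \<le> B"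
  shows "norm (occ P rho \<gamma> p - occ P rho \<gamma> q) \<le> B / (1 - \<gamma>)\<^sup>2"
proof -
  have "norm (occ P rho \<gamma> p - occ P rho \<gamma> q)
      \<le> (\<Sum>s\<in>UNIV. \<Sum>a\<in>UNIV. \<bar>occ P rho \<gamma> p $ (s, a) - occ P rho \<gamma> q $ (s, a)\<bar>)"
    using norm_le_l1_cart[of "occ P rho \<gamma> p - occ P rho \<gamma> q"]
    by (simp add: sum_UNIV_prod[of "\<lambda>x. \<bar>occ P rho \<gamma> p $ x - occ P rho \<gamma> q $ x\<bar>"])
  also have "\<dots> \<le> \<gamma> * B / (1 - \<gamma>)\<^sup>2 + B / (1 - \<gamma>)"
    using sum_abs_occ_diff_le[OF p q B] state_occ_l1_dist_le[OF p q B] by linarith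
  also have "\<dots> = B / (1 - \<gamma>)\<^sup>2"
    using discount_less_1 by (simp add: power2_eq_square divide_simps) (simp add: algebra_simps)
  finally show ?thesis .
qed

lemma norm_occ_segment_le:
  assumes p: "p \<in> policies" and q: "q \<in> policies" and t: "0 \<le> t" "t \<le> 1"
  shows "norm (occ P rho \<gamma> (p + t *\<^sub>R (q - p)) - occ P rho \<gamma> p) \<le> 2 / (1 - \<gamma>)\<^sup>2 * t"
proof -
  have "(\<Sum>a\<in>UNIV. \<bar>(p + t *\<^sub>R (q - p)) $ (s, a) - p $ (s, a)\<bar>) \<le> 2 * t" for s
    using t mult_left_mono[OF policy_row_l1_dist_le_2[OF q p, of s] t(1)]
    by (simp add: abs_mult sum_distrib_left[symmetric] mult.commute)
  from norm_occ_diff_le[OF policy_segment_in_policies[OF p q t] p this] show ?thesis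
    by simp
qed

lemma eventually_norm_occ_segment_le:
  assumes p: "p \<in> policies" and q: "q \<in> policies"
  shows "\<forall>\<^sub>F t in at_right 0. norm (occ P rho \<gamma> (p + t *\<^sub>R (q - p)) - occ P rho \<gamma> p) \<le> 2 / (1 - \<gamma>)\<^sup>2 * t"
proof -
  have "\<forall>\<^sub>F t in at_right 0. t \<in> {0<..<1::real}"
    by (rule eventually_at_right_real) simp
  then show ?thesis
  proof eventually_elim
    case (elim t)
    then show ?case
      using norm_occ_segment_le[OF p q, of t] by simp
  qed
qed

lemma tendsto_state_occ_segment:
  assumes p: "p \<in> policies" and q: "q \<in> policies"
  shows "((\<lambda>t. state_occ (p + t *\<^sub>R (q - p)) s) \<longlongrightarrow> state_occ p s) (at_right 0)"
proof -
  have unit: "\<forall>\<^sub>F t in at_right 0. t \<in> {0<..<1::real}"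
    by (rule eventually_at_right_real) simp
  have "((\<lambda>t. occ P rho \<gamma> (p + t *\<^sub>R (q - p))) \<longlongrightarrow> occ P rho \<gamma> p) (at_right 0)"
    unfolding Lim_null[of _ "occ P rho \<gamma> p"]
  proof (rule Lim_null_comparison)
    show "\<forall>\<^sub>F t in at_right 0.
        norm (occ P rho \<gamma> (p + t *\<^sub>R (q - p)) - occ P rho \<gamma> p) \<le> 2 / (1 - \<gamma>)\<^sup>2 * t"
      by (rule eventually_norm_occ_segment_le[OF p q])
    show "((\<lambda>t. 2 / (1 - \<gamma>)\<^sup>2 * t) \<longlongrightarrow> 0) (at_right 0)"
      by (intro tendsto_eq_intros) auto
  qed
  then have "((\<lambda>t. \<Sum>a\<in>UNIV. occ P rho \<gamma> (p + t *\<^sub>R (q - p)) $ (s, a)) \<longlongrightarrow> state_occ p s) (at_right 0)"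
    unfolding sum_occ_row[OF p, symmetric] by (intro tendsto_intros)
  then show ?thesis
    by (rule Lim_transform_eventually)
      (use unit in \<open>auto elim!: eventually_mono simp: sum_occ_row policy_segment_in_policies p q\<close>)
qed

lemma inner_occ_segment:
  assumes p: "p \<in> policies" and q: "q \<in> policies" and t: "0 \<le> t" "t \<le> 1"
  shows "u \<bullet> (occ P rho \<gamma> (p + t *\<^sub>R (q - p)) - occ P rho \<gamma> p)
           = t * (\<Sum>s\<in>UNIV. state_occ (p + t *\<^sub>R (q - p)) s
                   * (\<Sum>a\<in>UNIV. (q $ (s, a) - p $ (s, a)) * Qfun P \<gamma> p u $ (s, a)))"
  using performance_difference[OF policy_segment_in_policies[OF p q t] p, of u]
  by (simp add: inner_diff_right sum_distrib_left mult_ac)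

lemma tendsto_difference_quotient_occ_segment:
  fixes F :: "real ^ ('s \<times> 'a) \<Rightarrow> real"
  assumes p: "p \<in> policies" and q: "q \<in> policies" and F_diff: "F differentiable (at (occ P rho \<gamma> p))"
  defines "w s \<equiv> \<Sum>a\<in>UNIV. (q $ (s, a) - p $ (s, a)) * Qfun P \<gamma> p (grad F (occ P rho \<gamma> p)) $ (s, a)"
  shows "((\<lambda>t. (F (occ P rho \<gamma> (p + t *\<^sub>R (q - p))) - F (occ P rho \<gamma> p)) / t)
           \<longlongrightarrow> (\<Sum>s\<in>UNIV. state_occ p s * w s)) (at_right 0)"
proof -
  define \<mu> where "\<mu> = occ P rho \<gamma> p"
  define c where "c t = occ P rho \<gamma> (p + t *\<^sub>R (q - p))" for t
  define F' where "F' = frechet_derivative F (at \<mu>)"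
  have unit: "\<forall>\<^sub>F t in at_right 0. t \<in> {0<..<1::real}"
    by (rule eventually_at_right_real) simp
  have "(F has_derivative F') (at \<mu>)"
    using F_diff unfolding \<mu>_def F'_def by (rule frechet_derivative_works[THEN iffD1])
  moreover have "\<forall>\<^sub>F t in at_right 0. norm (c t - \<mu>) \<le> 2 / (1 - \<gamma>)\<^sup>2 * t"
    unfolding c_def \<mu>_def by (rule eventually_norm_occ_segment_le[OF p q])
  ultimately have remainder: "((\<lambda>t. (F (c t) - F \<mu> - F' (c t - \<mu>)) /\<^sub>R t) \<longlongrightarrow> 0) (at_right 0)"
    by (rule has_derivative_remainder_along_path)
  have "((\<lambda>t. \<Sum>s\<in>UNIV. state_occ (p + t *\<^sub>R (q - p)) s * w s) \<longlongrightarrow> (\<Sum>s\<in>UNIV. state_occ p s * w s))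
      (at_right 0)"
    by (intro tendsto_intros tendsto_state_occ_segment p q)
  then have "((\<lambda>t. (\<Sum>s\<in>UNIV. state_occ (p + t *\<^sub>R (q - p)) s * w s)
      + (F (c t) - F \<mu> - F' (c t - \<mu>)) /\<^sub>R t) \<longlongrightarrow> (\<Sum>s\<in>UNIV. state_occ p s * w s)) (at_right 0)"
    using tendsto_add[OF _ remainder] by simp
  then show ?thesis
  proof (rule Lim_transform_eventually)
    show "\<forall>\<^sub>F t in at_right 0. (\<Sum>s\<in>UNIV. state_occ (p + t *\<^sub>R (q - p)) s * w s)
        + (F (c t) - F \<mu> - F' (c t - \<mu>)) /\<^sub>R t
        = (F (occ P rho \<gamma> (p + t *\<^sub>R (q - p))) - F (occ P rho \<gamma> p)) / t"
      using unit
    proof eventually_elim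
      case (elim t)
      then have "F' (c t - \<mu>) = t * (\<Sum>s\<in>UNIV. state_occ (p + t *\<^sub>R (q - p)) s * w s)"
        using F_diff inner_occ_segment[OF p q, of t "grad F \<mu>"]
        by (simp add: F'_def c_def \<mu>_def w_def frechet_derivative_eq_inner_grad)
      with elim show ?case
        by (simp add: c_def \<mu>_def field_simps)
    qed
  qed
qed

text \<open>A form of the policy gradient theorem: both sides are right-hand limits of the same
  difference quotient along the segment from \<open>p\<close> to \<open>q\<close>.\<close>

lemma derivative_eq_policy_gradient:
  fixes F D :: "real ^ ('s \<times> 'a) \<Rightarrow> real"
  assumes p: "p \<in> policies" and q: "q \<in> policies"
    and F_diff: "F differentiable (at (occ P rho \<gamma> p))" and D: "linear D"
    and approx: "\<forall>p'\<in>policies. \<bar>F (occ P rho \<gamma> p') - F (occ P rho \<gamma> p) - D (p' - p)\<bar>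
                    \<le> C * (norm (p' - p))\<^sup>2"
  shows "D (q - p) = (\<Sum>s\<in>UNIV. state_occ p s
            * (\<Sum>a\<in>UNIV. (q $ (s, a) - p $ (s, a)) * Qfun P \<gamma> p (grad F (occ P rho \<gamma> p)) $ (s, a)))"
proof -
  define \<phi> where "\<phi> t = F (occ P rho \<gamma> (p + t *\<^sub>R (q - p)))" for t
  have "((\<lambda>t. (\<phi> t - \<phi> 0) / t) \<longlongrightarrow> D (q - p)) (at_right 0)"
  proof (rule tendsto_difference_quotient_at_right)
    fix t :: real
    assume t: "0 < t" "t \<le> 1"
    then have "\<bar>\<phi> t - \<phi> 0 - D (t *\<^sub>R (q - p))\<bar> \<le> C * (norm (t *\<^sub>R (q - p)))\<^sup>2"
      using approx[rule_format, OF policy_segment_in_policies[OF p q, of t]] by (simp add: \<phi>_def)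
    then show "\<bar>\<phi> t - \<phi> 0 - t * D (q - p)\<bar> \<le> C * (norm (q - p))\<^sup>2 * t\<^sup>2"
      using t by (simp add: linear_scale[OF D] power_mult_distrib mult_ac)
  qed
  moreover have "((\<lambda>t. (\<phi> t - \<phi> 0) / t) \<longlongrightarrow> (\<Sum>s\<in>UNIV. state_occ p s
      * (\<Sum>a\<in>UNIV. (q $ (s, a) - p $ (s, a)) * Qfun P \<gamma> p (grad F (occ P rho \<gamma> p)) $ (s, a))))
      (at_right 0)"
    unfolding \<phi>_def using tendsto_difference_quotient_occ_segment[OF p q F_diff] by simp
  ultimately show ?thesis
    by (rule tendsto_unique[rotated]) simp
qed

section \<open>Convergence of projected Q-ascent\<close>

definition weighted_sq_dist :: "real ^ ('s \<times> 'a) \<Rightarrow> real ^ ('s \<times> 'a) \<Rightarrow> real" where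
  "weighted_sq_dist p v = (\<Sum>s\<in>UNIV. state_occ p s * (\<Sum>a\<in>UNIV. (v $ (s, a) - p $ (s, a))\<^sup>2))"

lemma norm_sq_le_weighted_sq_dist:
  assumes p: "p \<in> policies" and rho_min: "\<forall>s. rho_min \<le> rho s"
  shows "rho_min * (norm (v - p))\<^sup>2 \<le> weighted_sq_dist p v"
proof -
  have "rho_min * (norm (v - p))\<^sup>2 = (\<Sum>s\<in>UNIV. rho_min * (\<Sum>a\<in>UNIV. (v $ (s, a) - p $ (s, a))\<^sup>2))"
    by (simp add: norm_sq_vec sum_UNIV_prod[of "\<lambda>x. rho_min * (v $ x - p $ x)\<^sup>2"] sum_distrib_left)
  also have "\<dots> \<le> weighted_sq_dist p v"
    unfolding weighted_sq_dist_def using rho_min state_occ_ge_rho[OF p]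
    by (intro sum_mono mult_right_mono sum_nonneg) (auto intro: order_trans)
  finally show ?thesis .
qed

lemma weighted_sq_dist_le:
  assumes p: "p \<in> policies" and v: "v \<in> policies"
  shows "weighted_sq_dist p v \<le> 2 / (1 - \<gamma>)"
proof -
  have "weighted_sq_dist p v \<le> (\<Sum>s\<in>UNIV. state_occ p s * 2)"
    unfolding weighted_sq_dist_def
    by (intro sum_mono mult_left_mono policy_row_sq_dist_le_2[OF v p] state_occ_nonneg[OF p])
  also have "\<dots> = 2 / (1 - \<gamma>)"
    by (simp add: sum_distrib_right[symmetric] sum_state_occ[OF p])
  finally show ?thesis .
qed

text \<open>As \<open>d\<^sup>p \<ge> \<rho> \<ge> \<rho>\<^sub>m\<^sub>i\<^sub>n\<close>, the quadratic term of \<open>L\<close>-smoothness is dominated by the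
  occupancy-weighted norm, so the projection step acts as a proximal step for that norm.\<close>

lemma pqa_step_ascent:
  fixes F D :: "real ^ ('s \<times> 'a) \<Rightarrow> real"
  assumes p: "p \<in> policies" and v: "v \<in> policies"
    and F_diff: "F differentiable (at (occ P rho \<gamma> p))" and D: "linear D"
    and smooth: "\<forall>p'\<in>policies. \<bar>F (occ P rho \<gamma> p') - F (occ P rho \<gamma> p) - D (p' - p)\<bar>
                    \<le> L / 2 * (norm (p' - p))\<^sup>2"
    and L: "0 < L" and rho_min: "0 < rho_min" "\<forall>s. rho_min \<le> rho s"
  shows "F (occ P rho \<gamma> v) - F (occ P rho \<gamma> (pqa_step P rho \<gamma> F (rho_min / L) p))
           \<le> L / rho_min * weighted_sq_dist p v"
proof -
  define \<eta> where "\<eta> = rho_min / L"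
  define p' where "p' = pqa_step P rho \<gamma> F \<eta> p"
  define Q where "Q = Qfun P \<gamma> p (pseudo_reward P rho \<gamma> F p)"
  define lin where "lin x = (\<Sum>s\<in>UNIV. state_occ p s * (\<Sum>a\<in>UNIV. (x $ (s, a) - p $ (s, a)) * Q $ (s, a)))"
    for x
  have \<eta>: "0 < \<eta>"
    using L rho_min by (simp add: \<eta>_def)
  have p': "p' \<in> policies"
    by (simp add: p'_def pqa_step_in_policies)
  have D_eq: "D (x - p) = lin x" if "x \<in> policies" for x
    using derivative_eq_policy_gradient[OF p that F_diff D smooth]
    by (simp add: lin_def Q_def pseudo_reward_def)
  have "(\<Sum>s\<in>UNIV. state_occ p s * ((\<Sum>a\<in>UNIV. (v $ (s, a) - p $ (s, a)) * Q $ (s, a))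
          - (\<Sum>a\<in>UNIV. (v $ (s, a) - p $ (s, a))\<^sup>2) / (2 * \<eta>)))
      \<le> (\<Sum>s\<in>UNIV. state_occ p s * ((\<Sum>a\<in>UNIV. (p' $ (s, a) - p $ (s, a)) * Q $ (s, a))
          - (\<Sum>a\<in>UNIV. (p' $ (s, a) - p $ (s, a))\<^sup>2) / (2 * \<eta>)))"
    unfolding p'_def Q_def
    by (intro sum_mono mult_left_mono pqa_step_row_ascent[OF v \<eta>] state_occ_nonneg[OF p])
  then have prox: "lin v - weighted_sq_dist p v / (2 * \<eta>) \<le> lin p' - weighted_sq_dist p p' / (2 * \<eta>)"
    unfolding lin_def weighted_sq_dist_def
    by (simp only: right_diff_distrib sum_subtractf times_divide_eq_right sum_divide_distrib[symmetric])
  have quad: "L / 2 * (norm (x - p))\<^sup>2 \<le> weighted_sq_dist p x / (2 * \<eta>)" for x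
    using norm_sq_le_weighted_sq_dist[OF p rho_min(2), of x] L rho_min
    by (simp add: \<eta>_def field_simps)
  have upper: "F (occ P rho \<gamma> v) \<le> F (occ P rho \<gamma> p) + D (v - p) + L / 2 * (norm (v - p))\<^sup>2"
    using smooth[rule_format, OF v] unfolding abs_le_iff by linarith
  have lower: "F (occ P rho \<gamma> p) + D (p' - p) - L / 2 * (norm (p' - p))\<^sup>2 \<le> F (occ P rho \<gamma> p')"
    using smooth[rule_format, OF p'] unfolding abs_le_iff by linarith
  have "F (occ P rho \<gamma> v) - F (occ P rho \<gamma> p') \<le> 2 * (weighted_sq_dist p v / (2 * \<eta>))"
    using upper lower prox quad[of v] quad[of p'] D_eq[OF v] D_eq[OF p'] by linarith
  then show ?thesis
    using L rho_min by (simp add: p'_def \<eta>_def field_simps)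
qed

lemma sum_sq_state_occ_le:
  assumes "p \<in> policies"
  shows "(\<Sum>s\<in>UNIV. (state_occ p s)\<^sup>2) \<le> 1 / (1 - \<gamma>)\<^sup>2"
proof -
  have "(\<Sum>s\<in>UNIV. (state_occ p s)\<^sup>2) \<le> (\<Sum>s\<in>UNIV. state_occ p s * (1 / (1 - \<gamma>)))"
    unfolding power2_eq_square
    by (intro sum_mono mult_left_mono state_occ_le[OF assms] state_occ_nonneg[OF assms])
  also have "\<dots> = 1 / (1 - \<gamma>)\<^sup>2"
    by (simp add: sum_divide_distrib[symmetric] sum_state_occ[OF assms] power2_eq_square)
  finally show ?thesis .
qed

lemma state_occ_of_occ_mixture:
  assumes p: "p \<in> policies" and v: "v \<in> policies" and q: "q \<in> policies"
    and mix: "occ P rho \<gamma> q = (1 - \<alpha>) *\<^sub>R occ P rho \<gamma> p + \<alpha> *\<^sub>R occ P rho \<gamma> v"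
  shows "state_occ q s = (1 - \<alpha>) * state_occ p s + \<alpha> * state_occ v s"
  using arg_cong[OF mix, of "\<lambda>\<mu>. \<Sum>a\<in>UNIV. \<mu> $ (s, a)"]
  by (simp add: sum_occ_row p v q sum.distrib sum_distrib_left[symmetric])

lemma policy_diff_of_occ_mixture:
  assumes p: "p \<in> policies" and v: "v \<in> policies" and q: "q \<in> policies"
    and mix: "occ P rho \<gamma> q = (1 - \<alpha>) *\<^sub>R occ P rho \<gamma> p + \<alpha> *\<^sub>R occ P rho \<gamma> v"
    and pos: "0 < state_occ q s"
  shows "q $ (s, a) - p $ (s, a) = \<alpha> * state_occ v s / state_occ q s * (v $ (s, a) - p $ (s, a))"
proof -
  have "state_occ q s * q $ (s, a)
      = (1 - \<alpha>) * (state_occ p s * p $ (s, a)) + \<alpha> * (state_occ v s * v $ (s, a))"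
    using arg_cong[OF mix, of "\<lambda>\<mu>. \<mu> $ (s, a)"] by (simp add: occ_eq_state_occ p v q)
  then show ?thesis
    using pos unfolding state_occ_of_occ_mixture[OF p v q mix] by (simp add: field_simps)
qed

text \<open>By the previous lemma \<open>q\<close> deviates from \<open>p\<close> by \<open>O(\<alpha>)\<close> in every state, since
  \<open>d\<^sup>q \<ge> \<rho>\<^sub>m\<^sub>i\<^sub>n\<close> and \<open>d\<^sup>q \<ge> (1-\<alpha>) d\<^sup>p \<ge> d\<^sup>p/2\<close>.\<close>

lemma weighted_sq_dist_mixture_le:
  assumes p: "p \<in> policies" and v: "v \<in> policies" and q: "q \<in> policies"
    and \<alpha>: "0 \<le> \<alpha>" "\<alpha> \<le> 1 / 2" and rho_min: "0 < rho_min" "\<forall>s. rho_min \<le> rho s"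
    and mix: "occ P rho \<gamma> q = (1 - \<alpha>) *\<^sub>R occ P rho \<gamma> p + \<alpha> *\<^sub>R occ P rho \<gamma> v"
  shows "weighted_sq_dist p q \<le> 4 * \<alpha>\<^sup>2 / rho_min * (1 / (1 - \<gamma>))\<^sup>2"
proof -
  have per_state: "state_occ p s * (\<Sum>a\<in>UNIV. (q $ (s, a) - p $ (s, a))\<^sup>2)
      \<le> 4 * \<alpha>\<^sup>2 / rho_min * (state_occ v s)\<^sup>2" for s
  proof -
    define r where "r = \<alpha> * state_occ v s / state_occ q s"
    have dq: "rho_min \<le> state_occ q s"
      using rho_min(2) state_occ_ge_rho[OF q, of s] by (meson order_trans)
    have "1 / 2 * state_occ p s \<le> (1 - \<alpha>) * state_occ p s"
      using \<alpha> state_occ_nonneg[OF p, of s] by (intro mult_right_mono) auto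
    moreover have "0 \<le> \<alpha> * state_occ v s"
      using \<alpha> state_occ_nonneg[OF v, of s] by simp
    ultimately have dp: "state_occ p s \<le> 2 * state_occ q s"
      using state_occ_of_occ_mixture[OF p v q mix, of s] by linarith
    have diff: "q $ (s, a) - p $ (s, a) = r * (v $ (s, a) - p $ (s, a))" for a
      unfolding r_def using dq rho_min(1) by (intro policy_diff_of_occ_mixture[OF p v q mix]) simp
    have "(\<Sum>a\<in>UNIV. (q $ (s, a) - p $ (s, a))\<^sup>2) = r\<^sup>2 * (\<Sum>a\<in>UNIV. (v $ (s, a) - p $ (s, a))\<^sup>2)"
      by (simp add: diff power_mult_distrib sum_distrib_left)
    also have "\<dots> \<le> 2 * r\<^sup>2"
      using mult_left_mono[OF policy_row_sq_dist_le_2[OF v p, of s], of "r\<^sup>2"] by simp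
    finally have "state_occ p s * (\<Sum>a\<in>UNIV. (q $ (s, a) - p $ (s, a))\<^sup>2) \<le> state_occ p s * (2 * r\<^sup>2)"
      by (rule mult_left_mono) (rule state_occ_nonneg[OF p])
    also have "\<dots> = 2 * (\<alpha> * state_occ v s)\<^sup>2 * (state_occ p s / (state_occ q s)\<^sup>2)"
      by (simp add: r_def power_divide)
    also have "state_occ p s / (state_occ q s)\<^sup>2 \<le> 2 / rho_min"
    proof -
      have "state_occ p s * rho_min \<le> 2 * state_occ q s * state_occ q s"
        using dp dq rho_min(1) by (intro mult_mono) auto
      then show ?thesis
        using dq rho_min(1) by (simp add: field_simps power2_eq_square)
    qed
    finally show ?thesis
      by (simp add: power_mult_distrib mult_left_mono)
  qed
  have "weighted_sq_dist p q \<le> (\<Sum>s\<in>UNIV. 4 * \<alpha>\<^sup>2 / rho_min * (state_occ v s)\<^sup>2)"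
    unfolding weighted_sq_dist_def by (intro sum_mono per_state)
  also have "\<dots> \<le> 4 * \<alpha>\<^sup>2 / rho_min * (1 / (1 - \<gamma>))\<^sup>2"
    unfolding sum_distrib_left[symmetric] power_one_over
    using rho_min(1) by (intro mult_left_mono sum_sq_state_occ_le[OF v]) auto
  finally show ?thesis .
qed

end

locale general_utility_mdp = mdp P rho \<gamma>
  for P :: "'s::finite \<Rightarrow> 'a::finite \<Rightarrow> 's \<Rightarrow> real" and rho \<gamma> +
  fixes F :: "real ^ ('s \<times> 'a) \<Rightarrow> real" and rho_min L :: real
  assumes F_concave: "concave_on (occ_set P rho \<gamma>) F"
    and F_diff: "\<forall>mu \<in> occ_set P rho \<gamma>. F differentiable (at mu)"
    and rho_min: "0 < rho_min" "\<forall>s. rho_min \<le> rho s"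
    and L: "0 < L"
    and smooth: "\<forall>p' \<in> policies. \<exists>D.
          ((\<lambda>p. F (occ P rho \<gamma> p)) has_derivative D) (at p' within policies) \<and>
          (\<forall>p \<in> policies. \<bar>F (occ P rho \<gamma> p) - F (occ P rho \<gamma> p') - D (p - p')\<bar>
               \<le> L / 2 * (norm (p - p'))\<^sup>2)"
begin

abbreviation G :: "real ^ ('s \<times> 'a) \<Rightarrow> real" where
  "G p \<equiv> F (occ P rho \<gamma> p)"

abbreviation pqa :: "real ^ ('s \<times> 'a) \<Rightarrow> real ^ ('s \<times> 'a)" where
  "pqa \<equiv> pqa_step P rho \<gamma> F (rho_min / L)"

lemma pqa_ascent:
  assumes "p \<in> policies" "v \<in> policies"
  shows "G v - G (pqa p) \<le> L / rho_min * weighted_sq_dist p v"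
proof -
  obtain D where D: "((\<lambda>p. G p) has_derivative D) (at p within policies)"
    and approx: "\<forall>p'\<in>policies. \<bar>G p' - G p - D (p' - p)\<bar> \<le> L / 2 * (norm (p' - p))\<^sup>2"
    using smooth assms(1) by blast
  have "F differentiable (at (occ P rho \<gamma> p))"
    using F_diff assms(1) by (auto simp: occ_set_def)
  then show ?thesis
    using pqa_step_ascent[OF assms _ has_derivative_linear[OF D] approx L rho_min] by blast
qed

lemma pqa_gap_le:
  assumes "p \<in> policies" "v \<in> policies"
  shows "G v - G (pqa p) \<le> 2 * L / ((1 - \<gamma>) * rho_min)"
proof -
  have "L / rho_min * weighted_sq_dist p v \<le> L / rho_min * (2 / (1 - \<gamma>))"
    using L rho_min(1) by (intro mult_left_mono weighted_sq_dist_le[OF assms]) auto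
  also have "\<dots> = 2 * L / ((1 - \<gamma>) * rho_min)"
    by (simp add: mult_ac)
  finally show ?thesis
    using pqa_ascent[OF assms] by linarith
qed

text \<open>Concavity of \<open>F\<close> on the convex set of occupancy measures lets us compare with the
  policy whose occupancy measure is \<open>(1-\<alpha>)\<mu>\<^sup>p + \<alpha>\<mu>\<^sup>v\<close>, although \<open>\<pi> \<mapsto> F(\<mu>\<^sup>\<pi>)\<close> itself
  need not be concave.\<close>

lemma pqa_gap_contraction:
  assumes p: "p \<in> policies" and v: "v \<in> policies" and \<alpha>: "0 \<le> \<alpha>" "\<alpha> \<le> 1 / 2"
  shows "G v - G (pqa p) \<le> (1 - \<alpha>) * (G v - G p) + 4 * L * \<alpha>\<^sup>2 / ((1 - \<gamma>) * rho_min)\<^sup>2"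
proof -
  have occ_in: "occ P rho \<gamma> x \<in> occ_set P rho \<gamma>" if "x \<in> policies" for x
    using that by (simp add: occ_set_def)
  have "convex (occ_set P rho \<gamma>)"
    using F_concave by (simp add: concave_on_iff)
  then have "(1 - \<alpha>) *\<^sub>R occ P rho \<gamma> p + \<alpha> *\<^sub>R occ P rho \<gamma> v \<in> occ_set P rho \<gamma>"
    using \<alpha> by (intro convexD occ_in p v) auto
  then obtain q where q: "q \<in> policies"
    and mix: "occ P rho \<gamma> q = (1 - \<alpha>) *\<^sub>R occ P rho \<gamma> p + \<alpha> *\<^sub>R occ P rho \<gamma> v"
    by (auto simp: occ_set_def)
  have "(1 - \<alpha>) * G p + \<alpha> * G v \<le> G q"
    unfolding mix using \<alpha> by (intro concave_onD[OF F_concave] occ_in p v) auto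
  moreover have "G q - G (pqa p) \<le> 4 * L * \<alpha>\<^sup>2 / ((1 - \<gamma>) * rho_min)\<^sup>2"
  proof -
    have "L / rho_min * weighted_sq_dist p q \<le> L / rho_min * (4 * \<alpha>\<^sup>2 / rho_min * (1 / (1 - \<gamma>))\<^sup>2)"
      using L rho_min \<alpha> by (intro mult_left_mono weighted_sq_dist_mixture_le[OF p v q _ _ _ _ mix]) auto
    also have "\<dots> = 4 * L * \<alpha>\<^sup>2 / ((1 - \<gamma>) * rho_min)\<^sup>2"
      by (simp add: power_mult_distrib power2_eq_square mult_ac)
    finally show ?thesis
      using pqa_ascent[OF p q] by linarith
  qed
  moreover have "(1 - \<alpha>) * (G v - G p) = G v - ((1 - \<alpha>) * G p + \<alpha> * G v)"
    by (simp add: algebra_simps)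
  ultimately show ?thesis
    by linarith
qed

lemma pqa_rate:
  assumes init: "pis 0 \<in> policies" and iter: "\<forall>k. pis (Suc k) = pqa (pis k)"
    and opt: "v \<in> policies" "\<forall>p \<in> policies. G p \<le> G v"
  shows "G v - G (pis (Suc n)) \<le> 16 * L / ((1 - \<gamma>) * rho_min)\<^sup>2 / Suc n"
proof -
  define x where "x = (1 - \<gamma>) * rho_min"
  define c where "c = 16 * L / x\<^sup>2"
  have pis: "pis k \<in> policies" for k
    by (induction k) (use init iter pqa_step_in_policies in auto)
  have "rho_min \<le> 1"
    using rho_min(2) rho_le_1 by (blast intro: order_trans)
  then have x: "0 < x" "x \<le> 1"
    unfolding x_def using discount_nonneg discount_less_1 rho_min(1) by (simp_all add: mult_le_one)
  have c: "0 < c"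
    unfolding c_def using L x(1) by simp
  have nonneg: "0 \<le> G v - G (pis k)" for k
    using opt pis by simp
  have bounded: "G v - G (pis (Suc k)) \<le> c / 4" for k
  proof -
    have "2 * L / x \<le> c / 4"
      using x L by (simp add: c_def field_simps power2_eq_square mult_left_mono)
    then show ?thesis
      using pqa_gap_le[OF pis opt(1), of k] iter by (simp add: x_def)
  qed
  have "G v - G (pis (Suc n)) \<le> c / (n + 2)"
  proof (rule inverse_rate_of_quadratic_decrease[OF c])
    show "G v - G (pis (Suc 0)) \<le> c / 2"
      using bounded[of 0] c by simp
    show "G v - G (pis (Suc (Suc k))) \<le> G v - G (pis (Suc k)) - (G v - G (pis (Suc k)))\<^sup>2 / c" for k
    proof (rule quadratic_decrease_of_recursive_bound[OF c nonneg bounded])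
      fix \<alpha> :: real
      assume "0 \<le> \<alpha>" "\<alpha> \<le> 1 / 2"
      from pqa_gap_contraction[OF pis[of "Suc k"] opt(1) this]
      show "G v - G (pis (Suc (Suc k))) \<le> (1 - \<alpha>) * (G v - G (pis (Suc k))) + c / 4 * \<alpha>\<^sup>2"
        using iter by (simp add: c_def x_def)
    qed
  qed (use nonneg in auto)
  also have "\<dots> \<le> c / Suc n"
    using c by (intro divide_left_mono) auto
  finally show ?thesis
    by (simp add: c_def x_def)
qed

end

theorem theorem4:
  fixes P :: "'s::finite \<Rightarrow> 'a::finite \<Rightarrow> 's \<Rightarrow> real"
    and rho :: "'s \<Rightarrow> real"
    and \<gamma> :: real
    and F :: "real ^ ('s \<times> 'a) \<Rightarrow> real"
    and rho_min U L :: real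
    and pi_star :: "real ^ ('s \<times> 'a)"
    and pis :: "nat \<Rightarrow> real ^ ('s \<times> 'a)"
    and K :: nat
  assumes kernel: "is_kernel P"
    and init: "is_distribution rho"
    and gamma: "0 \<le> \<gamma>" "\<gamma> < 1"
    and F_concave: "concave_on (occ_set P rho \<gamma>) F"
    and F_diff: "\<forall>mu \<in> occ_set P rho \<gamma>. F differentiable (at mu)"
    and rho_min: "0 < rho_min" "\<forall>s. rho_min \<le> rho s"
    and U: "0 \<le> U"
    and Gamma_bounds: "\<forall>p \<in> policies. \<forall>i.
          0 \<le> pseudo_reward P rho \<gamma> F p $ i \<and> pseudo_reward P rho \<gamma> F p $ i \<le> U"
    and L: "0 < L"
    and smooth: "\<forall>p' \<in> policies. \<exists>D.
          ((\<lambda>p. F (occ P rho \<gamma> p)) has_derivative D) (at p' within policies) \<and>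
          (\<forall>p \<in> policies. \<bar>F (occ P rho \<gamma> p) - F (occ P rho \<gamma> p') - D (p - p')\<bar>
               \<le> L / 2 * (norm (p - p'))\<^sup>2)"
    and opt: "pi_star \<in> policies" "\<forall>p \<in> policies. F (occ P rho \<gamma> p) \<le> F (occ P rho \<gamma> pi_star)"
    and init_policy: "pis 0 \<in> policies"
    and iter: "\<forall>k. pis (Suc k) = pqa_step P rho \<gamma> F (rho_min / L) (pis k)"
    and K: "1 \<le> K"
  shows "F (occ P rho \<gamma> pi_star) - F (occ P rho \<gamma> (pis K))
           \<le> 32 * L * (1 + 1 / ((1 - \<gamma>) * rho_min)) / ((1 - \<gamma>)\<^sup>2 * rho_min * real K)"
proof -
  interpret general_utility_mdp P rho \<gamma> F rho_min L
    using kernel init gamma F_concave F_diff rho_min L smooth by unfold_locales auto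
  define M where "M = 1 / ((1 - \<gamma>) * rho_min)"
  obtain n where n: "K = Suc n"
    using K by (cases K) auto
  have "0 \<le> M"
    using gamma rho_min(1) by (simp add: M_def)
  have "1 / rho_min \<le> M"
    unfolding M_def using gamma rho_min(1) by (intro divide_left_mono) (auto simp: mult_left_le_one_le)
  also have "M \<le> 2 * (1 + M)"
    using \<open>0 \<le> M\<close> by simp
  finally have M: "1 / rho_min \<le> 2 * (1 + M)" .
  have "F (occ P rho \<gamma> pi_star) - F (occ P rho \<gamma> (pis K)) \<le> 16 * L / ((1 - \<gamma>) * rho_min)\<^sup>2 / K"
    unfolding n by (rule pqa_rate[OF init_policy iter opt])
  also have "\<dots> = 16 * L / ((1 - \<gamma>)\<^sup>2 * rho_min * K) * (1 / rho_min)"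
    by (simp add: power2_eq_square mult_ac)
  also have "\<dots> \<le> 16 * L / ((1 - \<gamma>)\<^sup>2 * rho_min * K) * (2 * (1 + M))"
    using L rho_min(1) by (intro mult_left_mono M) simp
  also have "\<dots> = 32 * L * (1 + 1 / ((1 - \<gamma>) * rho_min)) / ((1 - \<gamma>)\<^sup>2 * rho_min * real K)"
    by (simp add: M_def mult_ac)
  finally show ?thesis .
qed

end
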